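(* Let $G=(V,E_1,\dots,E_k)$ be a complete edge-colored graph. If every monochromatic subgraph $G_{|i}$ of $G$ is a simple permutation graph (each with respect to some labeling, possibly depending on $i$) and $G$ does not contain a rainbow triangle, then $G$ is a complete edge-colored permutation graph.
   Context: A complete $k$-edge-colored graph $G=(V,E_1,\dots,E_k)$ is the complete graph on a finite set $V$ with edges partitioned into $k$ nonempty color classes $E_i$ (the one-vertex graph also counts); $G_{|i}=(V,E_i)$. A labeling is a bijection $\ell:V\to\{1,\dots,|V|\}$. A graph $(V,E)$ with labeling $\ell$ is a simple permutation graph of a permutation $\pi$ if for all $u,v$ with $\ell(u)>\ell(v)$: $\{u,v\}\in E$ iff $\pi^{-1}(\ell(u))<\pi^{-1}(\ell(v))$; a graph is a simple permutation graph if such $\ell$ and $\pi$ exist. $G$ is a complete edge-colored permutation graph if there exist a single labeling $\ell$ and permutations $\pi_1,\dots,\pi_k$ with $(G_{|i},\ell)$ a simple permutation graph of $\pi_i$ for all $i$. A rainbow triangle is a set of three vertices whose three edges have pairwise distinct colors. *)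

theory Defs
  imports Main "HOL-Combinatorics.Permutations"
begin

text \<open>A complete k-edge-colored graph on a finite nonempty vertex set V: the colour of the
  edge {u,v} (u \<noteq> v) is col u v, symmetric, with values in {1..k}, and every colour class
  is nonempty (this is vacuous for the one-vertex graph, which has no edges).\<close>
definition complete_edge_colored :: "'a set \<Rightarrow> nat \<Rightarrow> ('a \<Rightarrow> 'a \<Rightarrow> nat) \<Rightarrow> bool" where
  "complete_edge_colored V k col \<longleftrightarrow>
     finite V \<and> V \<noteq> {} \<and>
     (\<forall>u\<in>V. \<forall>v\<in>V. u \<noteq> v \<longrightarrow> col u v = col v u \<and> col u v \<in> {1..k}) \<and>
     (card V \<ge> 2 \<longrightarrow> (\<forall>i\<in>{1..k}. \<exists>u\<in>V. \<exists>v\<in>V. u \<noteq> v \<and> col u v = i))"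

definition color_class :: "'a set \<Rightarrow> ('a \<Rightarrow> 'a \<Rightarrow> nat) \<Rightarrow> nat \<Rightarrow> 'a set set" where
  "color_class V col i = {{u, v} | u v. u \<in> V \<and> v \<in> V \<and> u \<noteq> v \<and> col u v = i}"

definition labeling :: "'a set \<Rightarrow> ('a \<Rightarrow> nat) \<Rightarrow> bool" where
  "labeling V l \<longleftrightarrow> bij_betw l V {1..card V}"

definition simple_perm_graph_of :: "'a set \<Rightarrow> 'a set set \<Rightarrow> ('a \<Rightarrow> nat) \<Rightarrow> (nat \<Rightarrow> nat) \<Rightarrow> bool" where
  "simple_perm_graph_of V E l \<pi> \<longleftrightarrow>
     labeling V l \<and> \<pi> permutes {1..card V} \<and>
     (\<forall>u\<in>V. \<forall>v\<in>V. l u > l v \<longrightarrow> ({u, v} \<in> E \<longleftrightarrow> inv \<pi> (l u) < inv \<pi> (l v)))"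

definition simple_perm_graph :: "'a set \<Rightarrow> 'a set set \<Rightarrow> bool" where
  "simple_perm_graph V E \<longleftrightarrow> (\<exists>l \<pi>. simple_perm_graph_of V E l \<pi>)"

definition complete_edge_colored_perm_graph :: "'a set \<Rightarrow> nat \<Rightarrow> ('a \<Rightarrow> 'a \<Rightarrow> nat) \<Rightarrow> bool" where
  "complete_edge_colored_perm_graph V k col \<longleftrightarrow>
     complete_edge_colored V k col \<and>
     (\<exists>l. \<exists>\<pi> :: nat \<Rightarrow> nat \<Rightarrow> nat. \<forall>i\<in>{1..k}. simple_perm_graph_of V (color_class V col i) l (\<pi> i))"

definition rainbow_triangle :: "'a set \<Rightarrow> ('a \<Rightarrow> 'a \<Rightarrow> nat) \<Rightarrow> 'a \<Rightarrow> 'a \<Rightarrow> 'a \<Rightarrow> bool" where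
  "rainbow_triangle V col x y z \<longleftrightarrow>
     x \<in> V \<and> y \<in> V \<and> z \<in> V \<and> x \<noteq> y \<and> y \<noteq> z \<and> x \<noteq> z \<and>
     col x y \<noteq> col y z \<and> col y z \<noteq> col x z \<and> col x y \<noteq> col x z"

end

theory Submission
  imports Defs "HOL-Library.Product_Lexorder"
begin

text \<open>
  Call an ordering of the vertices good if in every triple a < b < c the edge ac has the color
  of ab or of bc. Given a good labeling l, for every color i the l-order with the pairs of color i
  reversed is again a strict total order; its ranks define a permutation that makes color class i
  a simple permutation graph with respect to l. So one good ordering serves all color classes at once.

  A good ordering is built by induction on the vertex set. If only two colors occur, the labeling of
  a permutation representation of one color class is good. Otherwise, by Gallai's theorem on colorings
  without rainbow triangles, some color class is disconnected, and its component through an edge is a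
  nontrivial module M: every outer vertex sees all of M in one color. Good orderings of M and of the
  graph with M contracted to a single vertex then combine lexicographically.
\<close>

section \<open>Monochromatic connectivity and Gallai's theorem\<close>

definition mono_edge :: "'a set \<Rightarrow> ('a \<Rightarrow> 'a \<Rightarrow> 'c) \<Rightarrow> 'c \<Rightarrow> 'a \<Rightarrow> 'a \<Rightarrow> bool" where
  "mono_edge W col i x y \<longleftrightarrow> x \<in> W \<and> y \<in> W \<and> x \<noteq> y \<and> col x y = i"

abbreviation mono_conn :: "'a set \<Rightarrow> ('a \<Rightarrow> 'a \<Rightarrow> 'c) \<Rightarrow> 'c \<Rightarrow> 'a \<Rightarrow> 'a \<Rightarrow> bool" where
  "mono_conn W col i \<equiv> (mono_edge W col i)\<^sup>*\<^sup>*"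

definition color_connected :: "'a set \<Rightarrow> ('a \<Rightarrow> 'a \<Rightarrow> 'c) \<Rightarrow> 'c \<Rightarrow> bool" where
  "color_connected W col i \<longleftrightarrow> (\<forall>x\<in>W. \<forall>y\<in>W. mono_conn W col i x y)"

definition two_colored :: "'a set \<Rightarrow> ('a \<Rightarrow> 'a \<Rightarrow> 'c) \<Rightarrow> 'c \<Rightarrow> 'c \<Rightarrow> bool" where
  "two_colored W col r s \<longleftrightarrow> (\<forall>u\<in>W. \<forall>w\<in>W. u \<noteq> w \<longrightarrow> col u w = r \<or> col u w = s)"

lemma two_coloredD:
  "two_colored W col r s \<Longrightarrow> u \<in> W \<Longrightarrow> w \<in> W \<Longrightarrow> u \<noteq> w \<Longrightarrow> col u w = r \<or> col u w = s"
  unfolding two_colored_def by blast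

lemma color_connected_incident:
  assumes "color_connected W col i" "a \<in> W" "b \<in> W" "a \<noteq> b" "col a b = i" "x \<in> W"
  shows "\<exists>y\<in>W. y \<noteq> x \<and> col x y = i"
proof (cases "x = a")
  case False
  have "mono_conn W col i x a" using assms unfolding color_connected_def by blast
  then show ?thesis
    using False by (cases rule: converse_rtranclpE) (auto simp: mono_edge_def)
qed (use assms in auto)

lemma two_colored_if_colors_at_vertex:
  assumes "\<forall>u\<in>W. \<forall>w\<in>W. u \<noteq> w \<longrightarrow> color_connected W col (col u w)"
    and "v \<in> W" and "\<forall>y\<in>W. y \<noteq> v \<longrightarrow> col v y = r \<or> col v y = s"
  shows "two_colored W col r s"
  unfolding two_colored_def
proof (intro ballI impI)
  fix u w assume "u \<in> W" "w \<in> W" "u \<noteq> w"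
  then obtain y where "y \<in> W" "y \<noteq> v" "col v y = col u w"
    using color_connected_incident[of W col "col u w" u w v] assms by blast
  then show "col u w = r \<or> col u w = s" using assms(3) by metis
qed

lemma mono_conn_leaves_new_vertex:
  assumes "mono_conn (insert v F) col i y v" "v \<notin> F" "y \<in> F"
  shows "\<exists>z\<in>F. mono_conn F col i y z \<and> col z v = i"
  using assms(1,3)
proof (induction rule: converse_rtranclp_induct)
  case base
  then show ?case using assms(2) by simp
next
  case (step y y')
  then have edge: "y' \<in> insert v F" "y \<noteq> y'" "col y y' = i"
    by (auto simp: mono_edge_def)
  show ?case
  proof (cases "y' = v")
    case False
    with edge step.prems obtain z where "z \<in> F" "mono_conn F col i y' z" "col z v = i"
      using step.IH by auto
    moreover have "mono_edge F col i y y'" using edge False step.prems by (simp add: mono_edge_def)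
    ultimately show ?thesis using converse_rtranclp_into_rtranclp[of "mono_edge F col i" y y'] by blast
  qed (use edge step.prems in auto)
qed

locale gallai_coloring =
  fixes V :: "'a set" and col :: "'a \<Rightarrow> 'a \<Rightarrow> 'c"
  assumes col_sym: "x \<in> V \<Longrightarrow> y \<in> V \<Longrightarrow> col x y = col y x"
    and no_rainbow: "x \<in> V \<Longrightarrow> y \<in> V \<Longrightarrow> z \<in> V \<Longrightarrow> x \<noteq> y \<Longrightarrow> y \<noteq> z \<Longrightarrow> x \<noteq> z \<Longrightarrow>
      col x y = col y z \<or> col y z = col x z \<or> col x y = col x z"
begin

lemma mono_conn_sym:
  assumes "W \<subseteq> V" "mono_conn W col i x y"
  shows "mono_conn W col i y x"
  using assms(2)
proof (induction rule: rtranclp_induct)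
  case (step y z)
  then have "mono_edge W col i z y" using assms(1) col_sym by (auto simp: mono_edge_def)
  then show ?case using step.IH by (meson converse_rtranclp_into_rtranclp)
qed simp

text \<open>If the color seen from w changed along an i-edge yz, the triangle wyz would be rainbow
  unless wy or wz had color i, which would put w into the component.\<close>
lemma mono_component_module:
  assumes "W \<subseteq> V" "w \<in> W" "\<not> mono_conn W col i a w" "mono_conn W col i a y"
  shows "col w y = col w a"
  using assms(4)
proof (induction rule: rtranclp_induct)
  case (step y z)
  have yz: "y \<in> W" "z \<in> W" "y \<noteq> z" "col y z = i" using step.hyps(2) by (auto simp: mono_edge_def)
  have no_edge: "\<not> mono_edge W col i y' w" if "mono_conn W col i a y'" for y'
    using assms(3) that by (meson rtranclp.rtrancl_into_rtrancl)
  have "mono_conn W col i a z" using step.hyps by (rule rtranclp.rtrancl_into_rtrancl)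
  moreover have "w \<in> V" "y \<in> V" "z \<in> V" using assms(1,2) yz by auto
  ultimately have "w \<noteq> y" "w \<noteq> z" "col w y \<noteq> i" "col w z \<noteq> i"
    using no_edge[of y] no_edge[of z] step.hyps(1) assms(1,2,3) yz col_sym[of w y] col_sym[of w z]
    by (auto simp: mono_edge_def)
  then show ?case
    using no_rainbow[of w y z] step.IH yz \<open>w \<in> V\<close> \<open>y \<in> V\<close> \<open>z \<in> V\<close> by auto
qed simp

lemma color_to_other_component:
  assumes "insert v F \<subseteq> V" "v \<notin> F"
    and touches: "\<forall>y\<in>F. \<exists>z\<in>F. mono_conn F col i y z \<and> col z v = i"
    and "x \<in> F" "col v x \<noteq> i" "y \<in> F" "\<not> mono_conn F col i x y"
  shows "col v x = col x y"
proof -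
  have FV: "F \<subseteq> V" using assms(1) by simp
  obtain z where z: "z \<in> F" "mono_conn F col i y z" "col z v = i"
    using touches \<open>y \<in> F\<close> by blast
  have "\<not> mono_conn F col i x z"
    using assms(7) mono_conn_sym[OF FV z(2)] rtranclp_trans[of _ x z y] by blast
  then have "x \<noteq> z" by blast
  with \<open>\<not> mono_conn F col i x z\<close> have "col x z \<noteq> i"
    using z(1) assms(4) by (auto simp: mono_edge_def intro: r_into_rtranclp)
  moreover have "col v z = i" "v \<noteq> x" "v \<noteq> z"
    using z col_sym[of v z] assms(1,2,4) by auto
  ultimately have "col v x = col x z"
    using no_rainbow[of v x z] assms(1,4,5) z(1) by auto
  also have "col x z = col x y"
    using mono_component_module[OF FV assms(4), of i y z] z(2) assms(7) mono_conn_sym[OF FV, of i y x]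
    by blast
  finally show ?thesis .
qed

text \<open>A vertex y outside the i-component of x1 links col v x1 and col v x2.\<close>
lemma unique_other_color_at_vertex:
  assumes "insert v F \<subseteq> V" "v \<notin> F"
    and touches: "\<forall>y\<in>F. \<exists>z\<in>F. mono_conn F col i y z \<and> col z v = i"
    and disconnected: "p \<in> F" "q \<in> F" "\<not> mono_conn F col i p q"
    and "x1 \<in> F" "x2 \<in> F" "col v x1 \<noteq> i" "col v x2 \<noteq> i"
  shows "col v x1 = col v x2"
proof -
  have FV: "F \<subseteq> V" using assms(1) by simp
  have conn_trans: "mono_conn F col i x z" if "mono_conn F col i x y" "mono_conn F col i y z" for x y z
    using that by (rule rtranclp_trans)
  note conn_sym = mono_conn_sym[OF FV]
  note across = color_to_other_component[OF assms(1,2) touches]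
  have x12: "x1 \<in> V" "x2 \<in> V" using FV assms(7,8) by auto
  show ?thesis
  proof (cases "mono_conn F col i x1 x2")
    case False
    then have "\<not> mono_conn F col i x2 x1" using conn_sym[of i x2 x1] by blast
    then have "col v x2 = col x2 x1" using across assms(7-10) by blast
    moreover have "col v x1 = col x1 x2" using across False assms(7-10) by blast
    ultimately show ?thesis using col_sym[OF x12] by simp
  next
    case True
    have "\<not> (mono_conn F col i x1 p \<and> mono_conn F col i x1 q)"
    proof
      assume "mono_conn F col i x1 p \<and> mono_conn F col i x1 q"
      then have "mono_conn F col i p x1" "mono_conn F col i x1 q" using conn_sym[of i x1 p] by auto
      then show False using disconnected(3) conn_trans[of p x1 q] by blast
    qed
    then obtain y where y: "y \<in> F" "\<not> mono_conn F col i x1 y" using disconnected(1,2) by blast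
    then have "\<not> mono_conn F col i x2 y" using True conn_trans[of x1 x2 y] by blast
    then have "col v x2 = col x2 y" using across assms(8,10) y(1) by blast
    moreover have "col v x1 = col x1 y" using across assms(7,9) y by blast
    moreover have "col y x2 = col y x1" using mono_component_module[OF FV y(1) y(2) True] .
    moreover have "y \<in> V" using y(1) FV by auto
    ultimately show ?thesis using col_sym x12 by metis
  qed
qed

lemma two_colored_insert:
  assumes "insert v F \<subseteq> V" "v \<notin> F"
    and connected: "\<forall>u\<in>insert v F. \<forall>w\<in>insert v F. u \<noteq> w \<longrightarrow> color_connected (insert v F) col (col u w)"
    and rs: "two_colored F col r s"
  shows "\<exists>r s. two_colored (insert v F) col r s"
proof -
  let ?W = "insert v F"
  have by_colors_at_v: "two_colored ?W col r s" if "\<forall>y\<in>F. col v y = r \<or> col v y = s" for r s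
    using two_colored_if_colors_at_vertex[of ?W col v r s] connected that by auto
  show ?thesis
  proof (cases "\<forall>y\<in>F. col v y = r \<or> col v y = s")
    case False
    then obtain y0 where y0: "y0 \<in> F" "col v y0 \<noteq> r" "col v y0 \<noteq> s" by blast
    have "col v y = col v y0" if "y \<in> F" for y
    proof -
      have "v \<noteq> y0" using y0(1) assms(2) by blast
      then have conn: "color_connected ?W col (col v y0)" using connected y0(1) by blast
      have "v \<in> ?W" "y0 \<in> ?W" "y \<in> ?W" using y0(1) that by auto
      then obtain z where z: "z \<in> ?W" "z \<noteq> y" "col y z = col v y0"
        using color_connected_incident[OF conn _ _ \<open>v \<noteq> y0\<close> refl] by blast
      have "z = v"
      proof (rule ccontr)
        assume "z \<noteq> v"
        then have "z \<in> F" using z(1) by blast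
        then have "col y z = r \<or> col y z = s" using two_coloredD[OF rs that] z(2) by auto
        then show False using z(3) y0 by simp
      qed
      moreover have "col v y = col y v" using col_sym[of v y] assms(1) that by blast
      ultimately show ?thesis using z(3) by simp
    qed
    then show ?thesis using by_colors_at_v by blast
  qed (use by_colors_at_v in blast)
qed

text \<open>Gallai: if every color class is connected, at most two colors occur. In the induction step
  every color occurring in W also occurs at the new vertex v, so it suffices to bound the colors at v.\<close>
lemma two_colored_if_colors_connected:
  assumes "finite W" "W \<subseteq> V" "\<forall>u\<in>W. \<forall>w\<in>W. u \<noteq> w \<longrightarrow> color_connected W col (col u w)"
  shows "\<exists>r s. two_colored W col r s"
  using assms
proof (induction W rule: finite_induct)
  case empty
  then show ?case by (simp add: two_colored_def)
next
  case (insert v F)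
  let ?W = "insert v F"
  have FV: "F \<subseteq> V" using insert.prems by simp
  have by_colors_at_v: "two_colored ?W col r s" if "\<forall>y\<in>F. col v y = r \<or> col v y = s" for r s
    using two_colored_if_colors_at_vertex[of ?W col v r s] insert.prems that by auto
  show ?case
  proof (cases "\<exists>r s. two_colored F col r s")
    case True
    then obtain r s where "two_colored F col r s" by blast
    then show ?thesis by (rule two_colored_insert[OF insert.prems(1) insert.hyps(2) insert.prems(2)])
  next
    case False
    then obtain a b where ab: "a \<in> F" "b \<in> F" "a \<noteq> b" "\<not> color_connected F col (col a b)"
      using insert.IH FV by blast
    let ?i = "col a b"
    obtain p q where pq: "p \<in> F" "q \<in> F" "\<not> mono_conn F col ?i p q"
      using ab(4) unfolding color_connected_def by blast
    have "\<exists>z\<in>F. mono_conn F col ?i y z \<and> col z v = ?i" if "y \<in> F" for y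
    proof -
      have "mono_conn ?W col ?i y v"
        using insert.prems(2) ab that unfolding color_connected_def by blast
      then show ?thesis using mono_conn_leaves_new_vertex insert.hyps(2) that by fast
    qed
    then have unique: "col v x1 = col v x2"
      if "x1 \<in> F" "x2 \<in> F" "col v x1 \<noteq> ?i" "col v x2 \<noteq> ?i" for x1 x2
      using unique_other_color_at_vertex[OF insert.prems(1) insert.hyps(2) _ pq that] by blast
    show ?thesis
    proof (cases "\<exists>x\<in>F. col v x \<noteq> ?i")
      case True
      then obtain x where "x \<in> F" "col v x \<noteq> ?i" by blast
      then show ?thesis using by_colors_at_v[of ?i "col v x"] unique by blast
    qed (use by_colors_at_v in blast)
  qed
qed

end

section \<open>Good orders\<close>

definition good_order :: "'a set \<Rightarrow> ('a \<Rightarrow> 'a \<Rightarrow> 'c) \<Rightarrow> ('a \<Rightarrow> 'b::linorder) \<Rightarrow> bool" where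
  "good_order W col f \<longleftrightarrow> (\<forall>a\<in>W. \<forall>b\<in>W. \<forall>c\<in>W. f a < f b \<longrightarrow> f b < f c \<longrightarrow>
      col a c = col a b \<or> col a c = col b c)"

text \<open>Unlike \<^const>\<open>simple_perm_graph_of\<close>, neither the labeling nor the positions need to be
  onto an interval, so the property passes to subsets.\<close>
definition perm_representable :: "'a set \<Rightarrow> ('a \<Rightarrow> 'a \<Rightarrow> 'c) \<Rightarrow> 'c \<Rightarrow> bool" where
  "perm_representable W col i \<longleftrightarrow> (\<exists>(l::'a \<Rightarrow> nat) (p::'a \<Rightarrow> nat). inj_on l W \<and>
      (\<forall>u\<in>W. \<forall>v\<in>W. l v < l u \<longrightarrow> (col u v = i \<longleftrightarrow> p u < p v)))"

lemma perm_representable_subset: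
  assumes "perm_representable W col i" "W' \<subseteq> W"
  shows "perm_representable W' col i"
proof -
  obtain l p :: "'a \<Rightarrow> nat" where "inj_on l W" "\<forall>u\<in>W. \<forall>v\<in>W. l v < l u \<longrightarrow> (col u v = i \<longleftrightarrow> p u < p v)"
    using assms(1) unfolding perm_representable_def by blast
  moreover have "inj_on l W'" using inj_on_subset[OF calculation(1) assms(2)] .
  ultimately show ?thesis unfolding perm_representable_def using assms(2) by blast
qed

lemma good_orderD:
  "good_order W col f \<Longrightarrow> a \<in> W \<Longrightarrow> b \<in> W \<Longrightarrow> c \<in> W \<Longrightarrow> f a < f b \<Longrightarrow> f b < f c \<Longrightarrow>
    col a c = col a b \<or> col a c = col b c"
  unfolding good_order_def by blast

lemma good_order_cong:
  assumes "good_order W col f" "\<forall>u\<in>W. \<forall>v\<in>W. g u < g v \<longleftrightarrow> f u < f v"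
  shows "good_order W col g"
  using assms unfolding good_order_def by blast

lemma rank_of_strict_total_order:
  assumes "finite V"
    and trans: "\<And>u v w. u \<in> V \<Longrightarrow> v \<in> V \<Longrightarrow> w \<in> V \<Longrightarrow> R u v \<Longrightarrow> R v w \<Longrightarrow> R u w"
    and irrefl: "\<And>u. u \<in> V \<Longrightarrow> \<not> R u u"
    and total: "\<And>u v. u \<in> V \<Longrightarrow> v \<in> V \<Longrightarrow> u \<noteq> v \<Longrightarrow> R u v \<or> R v u"
  shows "\<exists>q. bij_betw q V {1..card V} \<and> (\<forall>u\<in>V. \<forall>v\<in>V. q u < q v \<longleftrightarrow> R u v)"
proof -
  define q where "q u = card {z\<in>V. R z u} + 1" for u
  have less: "q u < q v" if "u \<in> V" "v \<in> V" "R u v" for u v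
  proof -
    have "{z\<in>V. R z u} \<subset> {z\<in>V. R z v}" using trans irrefl that by blast
    then show ?thesis unfolding q_def using assms(1) by (simp add: psubset_card_mono)
  qed
  have less_iff: "q u < q v \<longleftrightarrow> R u v" if "u \<in> V" "v \<in> V" for u v
  proof
    assume "q u < q v"
    then have "u \<noteq> v" "\<not> R v u" using less[OF that(2,1)] by auto
    then show "R u v" using total[OF that] by blast
  qed (rule less[OF that])
  have inj: "inj_on q V"
  proof (rule inj_onI)
    fix u v assume "u \<in> V" "v \<in> V" "q u = q v"
    then show "u = v" using less_iff total by (metis less_irrefl)
  qed
  have image: "q ` V \<subseteq> {1..card V}"
  proof
    fix x assume "x \<in> q ` V"
    then obtain u where "u \<in> V" "x = q u" by blast
    moreover have "{z\<in>V. R z u} \<subset> V" using irrefl \<open>u \<in> V\<close> by blast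
    ultimately show "x \<in> {1..card V}" unfolding q_def using assms(1) by (simp add: psubset_card_mono Suc_leI)
  qed
  have "q ` V = {1..card V}"
    by (rule card_subset_eq[OF finite_atLeastAtMost image]) (simp add: card_image[OF inj])
  then show ?thesis using inj less_iff unfolding bij_betw_def by blast
qed

lemma rank_of_injective:
  fixes f :: "'a \<Rightarrow> 'b::linorder"
  assumes "finite V" "inj_on f V"
  shows "\<exists>g::'a \<Rightarrow> nat. bij_betw g V {1..card V} \<and> (\<forall>u\<in>V. \<forall>v\<in>V. g u < g v \<longleftrightarrow> f u < f v)"
proof (rule rank_of_strict_total_order[OF assms(1)])
  fix u v assume "u \<in> V" "v \<in> V" "u \<noteq> v"
  then have "f u \<noteq> f v" using assms(2) by (simp add: inj_on_eq_iff)
  then show "f u < f v \<or> f v < f u" by (simp add: neq_iff)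
qed auto

definition collapse :: "'a set \<Rightarrow> 'a \<Rightarrow> 'a \<Rightarrow> 'a" where
  "collapse M a y = (if y \<in> M then a else y)"

lemma collapse_into: "y \<in> W \<Longrightarrow> collapse M a y \<in> insert a (W - M)"
  by (simp add: collapse_def)

lemma collapse_eq: "a \<in> M \<Longrightarrow> collapse M a x = collapse M a y \<Longrightarrow> x \<in> M \<and> y \<in> M \<or> x = y"
  by (auto simp: collapse_def split: if_splits)

lemma inj_on_substitute:
  assumes "a \<in> M" "inj_on f1 (insert a (W - M))" "inj_on f2 M"
  shows "inj_on (\<lambda>y. (f1 (collapse M a y), f2 y)) W"
proof (rule inj_onI)
  fix x y assume xy: "x \<in> W" "y \<in> W" "(f1 (collapse M a x), f2 x) = (f1 (collapse M a y), f2 y)"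
  then have "f1 (collapse M a x) = f1 (collapse M a y)" "f2 x = f2 y" by simp_all
  then have "collapse M a x = collapse M a y" "f2 x = f2 y"
    using inj_onD[OF assms(2) _ collapse_into[OF xy(1)] collapse_into[OF xy(2)]] by simp_all
  then show "x = y" using collapse_eq[OF assms(1)] assms(3) by (meson inj_onD)
qed

context gallai_coloring
begin

text \<open>An inversion of the outer pair forces an inversion of an inner pair, and inversions are
  transitive.\<close>
lemma good_order_two_colored:
  fixes p :: "'a \<Rightarrow> 'b::linorder"
  assumes "W \<subseteq> V" "two_colored W col r s"
    and perm: "\<forall>u\<in>W. \<forall>v\<in>W. l v < l u \<longrightarrow> (col u v = r \<longleftrightarrow> p u < p v)"
  shows "good_order W col l"
  unfolding good_order_def
proof (intro ballI impI)
  fix a b c assume abc: "a \<in> W" "b \<in> W" "c \<in> W" "l a < l b" "l b < l c"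
  have d: "a \<noteq> c" "a \<noteq> b" "b \<noteq> c" and "l a < l c" using abc(4,5) by auto
  then have "col c a = r \<longleftrightarrow> p c < p a" "col b a = r \<longleftrightarrow> p b < p a" "col c b = r \<longleftrightarrow> p c < p b"
    using perm[rule_format, OF abc(3,1)] perm[rule_format, OF abc(2,1,4)] perm[rule_format, OF abc(3,2,5)]
    by simp_all
  moreover have "col a c = col c a" "col a b = col b a" "col b c = col c b"
    using assms(1) abc(1-3) col_sym by (meson subsetD)+
  ultimately have inv: "col a c = r \<longleftrightarrow> p c < p a" "col a b = r \<longleftrightarrow> p b < p a" "col b c = r \<longleftrightarrow> p c < p b"
    by simp_all
  have two: "col a c = r \<or> col a c = s" "col a b = r \<or> col a b = s" "col b c = r \<or> col b c = s"
    using two_coloredD[OF assms(2)] abc(1-3) d by simp_all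
  show "col a c = col a b \<or> col a c = col b c"
  proof (cases "col a c = r")
    case True
    then have "p b < p a \<or> p c < p b" using inv(1) by (meson leI less_le_trans)
    then show ?thesis using True inv(2,3) by auto
  next
    case False
    then have "\<not> p c < p a" using inv(1) by simp
    then have "\<not> (p b < p a \<and> p c < p b)" by (meson less_trans)
    then have "col a b \<noteq> r \<or> col b c \<noteq> r" using inv(2,3) by simp
    then show ?thesis using False two by auto
  qed
qed

lemma exists_good_order_two_colored:
  assumes "finite W" "W \<subseteq> V" "two_colored W col r s"
    and "\<forall>u\<in>W. \<forall>w\<in>W. u \<noteq> w \<longrightarrow> perm_representable W col (col u w)"
  shows "\<exists>f::'a \<Rightarrow> nat. inj_on f W \<and> good_order W col f"
proof (cases "\<exists>u\<in>W. \<exists>w\<in>W. u \<noteq> w")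
  case True
  then obtain u w where "u \<in> W" "w \<in> W" "u \<noteq> w" by blast
  then obtain l p where "inj_on (l::'a \<Rightarrow> nat) W"
      "\<forall>x\<in>W. \<forall>y\<in>W. l y < l x \<longrightarrow> (col x y = col u w \<longleftrightarrow> (p::'a \<Rightarrow> nat) x < p y)"
    using assms(4) unfolding perm_representable_def by blast
  moreover have "col u w = r \<or> col u w = s"
    using two_coloredD[OF assms(3) \<open>u \<in> W\<close> \<open>w \<in> W\<close> \<open>u \<noteq> w\<close>] .
  then have "two_colored W col (col u w) (if col u w = r then s else r)"
    using assms(3) unfolding two_colored_def by auto
  ultimately show ?thesis using good_order_two_colored assms(2) by blast
next
  case False
  obtain f :: "'a \<Rightarrow> nat" where "inj_on f W" using finite_imp_inj_to_nat_seg[OF assms(1)] by blast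
  moreover have "good_order W col f" unfolding good_order_def using False by (metis less_irrefl)
  ultimately show ?thesis by blast
qed

lemma color_collapse:
  assumes "W \<subseteq> V" "M \<subseteq> W" "a \<in> M"
    and module: "\<forall>w\<in>W - M. \<forall>y\<in>M. col w y = col w a"
    and "x \<in> W" "y \<in> W" "collapse M a x \<noteq> collapse M a y"
  shows "col x y = col (collapse M a x) (collapse M a y)"
proof -
  have "x \<notin> M \<or> y \<notin> M" using assms(7) by (auto simp: collapse_def)
  moreover have "col x y = col y x" "col a y = col y a" "col x a = col a x"
    using assms(1-3,5,6) col_sym by (meson subsetD)+
  ultimately show ?thesis using module assms(5,6) by (auto simp: collapse_def)
qed

lemma good_order_substitute:
  fixes f1 :: "'a \<Rightarrow> 'b::linorder" and f2 :: "'a \<Rightarrow> 'd::linorder"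
  assumes "W \<subseteq> V" "M \<subseteq> W" "a \<in> M"
    and module: "\<forall>w\<in>W - M. \<forall>y\<in>M. col w y = col w a"
    and "inj_on f1 (insert a (W - M))" "good_order (insert a (W - M)) col f1"
    and "good_order M col f2"
  shows "good_order W col (\<lambda>y. (f1 (collapse M a y), f2 y))"
  unfolding good_order_def
proof (intro ballI impI)
  let ?\<pi> = "collapse M a"
  note col_\<pi> = color_collapse[OF assms(1-3) module]
  have f1_eq: "?\<pi> x = ?\<pi> y" if "x \<in> W" "y \<in> W" "f1 (?\<pi> x) = f1 (?\<pi> y)" for x y
    using assms(5) collapse_into that by (meson inj_onD)
  fix x y z assume xyz: "x \<in> W" "y \<in> W" "z \<in> W"
    "(f1 (?\<pi> x), f2 x) < (f1 (?\<pi> y), f2 y)" "(f1 (?\<pi> y), f2 y) < (f1 (?\<pi> z), f2 z)"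
  then have le: "f1 (?\<pi> x) \<le> f1 (?\<pi> y)" "f1 (?\<pi> y) \<le> f1 (?\<pi> z)" by auto
  consider "?\<pi> x = ?\<pi> z" | "?\<pi> x \<noteq> ?\<pi> z" "?\<pi> x = ?\<pi> y" | "?\<pi> x \<noteq> ?\<pi> z" "?\<pi> y = ?\<pi> z"
    | "?\<pi> x \<noteq> ?\<pi> y" "?\<pi> y \<noteq> ?\<pi> z" "?\<pi> x \<noteq> ?\<pi> z" by argo
  then show "col x z = col x y \<or> col x z = col y z"
  proof cases
    case 1
    then have "f1 (?\<pi> x) = f1 (?\<pi> y)" using le by (intro antisym) simp_all
    then have "?\<pi> x = ?\<pi> y" "?\<pi> y = ?\<pi> z" using f1_eq[OF xyz(1,2)] 1 by simp_all
    then have "x \<in> M" "y \<in> M" "z \<in> M" "f2 x < f2 y" "f2 y < f2 z"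
      using collapse_eq[OF assms(3), of x y] collapse_eq[OF assms(3), of y z] xyz(4,5) by auto
    then show ?thesis by (rule good_orderD[OF assms(7)])
  next
    case 2
    then have "col x z = col (?\<pi> y) (?\<pi> z)" "col y z = col (?\<pi> y) (?\<pi> z)"
      using col_\<pi>[OF xyz(1,3)] col_\<pi>[OF xyz(2,3)] by simp_all
    then show ?thesis by simp
  next
    case 3
    then have "col x z = col (?\<pi> x) (?\<pi> y)" "col x y = col (?\<pi> x) (?\<pi> y)"
      using col_\<pi>[OF xyz(1,3)] col_\<pi>[OF xyz(1,2)] by simp_all
    then show ?thesis by simp
  next
    case 4
    then have "f1 (?\<pi> x) \<noteq> f1 (?\<pi> y)" "f1 (?\<pi> y) \<noteq> f1 (?\<pi> z)"
      using f1_eq[OF xyz(1,2)] f1_eq[OF xyz(2,3)] by auto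
    then have "f1 (?\<pi> x) < f1 (?\<pi> y)" "f1 (?\<pi> y) < f1 (?\<pi> z)" using le by simp_all
    then have "col (?\<pi> x) (?\<pi> z) = col (?\<pi> x) (?\<pi> y) \<or> col (?\<pi> x) (?\<pi> z) = col (?\<pi> y) (?\<pi> z)"
      by (rule good_orderD[OF assms(6) collapse_into[OF xyz(1)] collapse_into[OF xyz(2)]
            collapse_into[OF xyz(3)]])
    then show ?thesis
      using col_\<pi>[OF xyz(1,3) 4(3)] col_\<pi>[OF xyz(1,2) 4(1)] col_\<pi>[OF xyz(2,3) 4(2)] by simp
  qed
qed

lemma nontrivial_module:
  assumes "W \<subseteq> V" "\<nexists>r s. two_colored W col r s" "finite W"
  obtains M a b where "M \<subseteq> W" "a \<in> M" "b \<in> M" "a \<noteq> b" "M \<noteq> W"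
    and "\<forall>w\<in>W - M. \<forall>y\<in>M. col w y = col w a"
proof -
  obtain a b where ab: "a \<in> W" "b \<in> W" "a \<noteq> b" "\<not> color_connected W col (col a b)"
    using two_colored_if_colors_connected[OF assms(3,1)] assms(2) by metis
  let ?i = "col a b"
  obtain p q where pq: "p \<in> W" "q \<in> W" "\<not> mono_conn W col ?i p q"
    using ab(4) unfolding color_connected_def by auto
  have "\<not> (mono_conn W col ?i a p \<and> mono_conn W col ?i a q)"
  proof
    assume "mono_conn W col ?i a p \<and> mono_conn W col ?i a q"
    then have "mono_conn W col ?i p a" "mono_conn W col ?i a q"
      using mono_conn_sym[OF assms(1)] by auto
    then show False using pq(3) by (meson rtranclp_trans)
  qed
  then obtain x where x: "x \<in> W" "\<not> mono_conn W col ?i a x" using pq(1,2) by auto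
  define M where "M = {y\<in>W. mono_conn W col ?i a y}"
  have "mono_edge W col ?i a b" using ab by (simp add: mono_edge_def)
  then have "M \<subseteq> W" "a \<in> M" "b \<in> M" "x \<notin> M"
    using ab(1,2) x(2) by (auto simp: M_def)
  moreover have "\<forall>w\<in>W - M. \<forall>y\<in>M. col w y = col w a"
  proof (intro ballI)
    fix w y assume "w \<in> W - M" "y \<in> M"
    then show "col w y = col w a"
      using mono_component_module[OF assms(1), of w ?i a y] by (simp add: M_def)
  qed
  ultimately show ?thesis using that ab(3) x(1) by blast
qed

lemma exists_good_order:
  assumes "finite W" "W \<subseteq> V" "\<forall>u\<in>W. \<forall>w\<in>W. u \<noteq> w \<longrightarrow> perm_representable W col (col u w)"
  shows "\<exists>f::'a \<Rightarrow> nat. inj_on f W \<and> good_order W col f"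
  using assms
proof (induction "card W" arbitrary: W rule: less_induct)
  case less
  have IH: "\<exists>f::'a \<Rightarrow> nat. inj_on f W' \<and> good_order W' col f" if "W' \<subseteq> W" "card W' < card W" for W'
  proof -
    have "finite W'" using finite_subset[OF that(1) less.prems(1)] .
    moreover have "W' \<subseteq> V" using that(1) less.prems(2) by (rule subset_trans)
    moreover have "\<forall>u\<in>W'. \<forall>w\<in>W'. u \<noteq> w \<longrightarrow> perm_representable W' col (col u w)"
    proof (intro ballI impI)
      fix u w assume "u \<in> W'" "w \<in> W'" "u \<noteq> w"
      then have "perm_representable W col (col u w)" using less.prems(3) that(1) by auto
      then show "perm_representable W' col (col u w)" using that(1) by (rule perm_representable_subset)
    qed
    ultimately show ?thesis by (rule less.hyps[OF that(2)])
  qed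
  show ?case
  proof (cases "\<exists>r s. two_colored W col r s")
    case True
    then obtain r s where "two_colored W col r s" by blast
    then show ?thesis by (rule exists_good_order_two_colored[OF less.prems(1,2) _ less.prems(3)])
  next
    case False
    obtain M a b where M: "M \<subseteq> W" "a \<in> M" "b \<in> M" "a \<noteq> b" "M \<noteq> W"
      and module: "\<forall>w\<in>W - M. \<forall>y\<in>M. col w y = col w a"
      by (rule nontrivial_module[OF less.prems(2) False less.prems(1)])
    let ?W1 = "insert a (W - M)"
    have "card ?W1 \<le> card (W - {b})"
      using M less.prems(1) by (intro card_mono) auto
    then have "card ?W1 < card W" using card_Diff1_less[OF less.prems(1)] M(1,3) by fastforce
    then obtain f1 :: "'a \<Rightarrow> nat" where f1: "inj_on f1 ?W1" "good_order ?W1 col f1"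
      using IH[of ?W1] M(1,2) by auto
    have "card M < card W" using M(1,5) less.prems(1) by (simp add: psubset_card_mono)
    then obtain f2 :: "'a \<Rightarrow> nat" where f2: "inj_on f2 M" "good_order M col f2"
      using IH[OF M(1)] by blast
    obtain g :: "'a \<Rightarrow> nat" where g: "bij_betw g W {1..card W}"
        "\<forall>u\<in>W. \<forall>v\<in>W. g u < g v \<longleftrightarrow>
          (f1 (collapse M a u), f2 u) < (f1 (collapse M a v), f2 v)"
      using rank_of_injective[OF less.prems(1) inj_on_substitute[OF M(2) f1(1) f2(1)]] by blast
    show ?thesis
      using good_order_cong[OF good_order_substitute[OF less.prems(2) M(1,2) module f1 f2(2)] g(2)]
        bij_betw_imp_inj_on[OF g(1)] by blast
  qed
qed

end

section \<open>From a good labeling to permutation representations\<close>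

lemma color_class_iff:
  assumes "u \<in> V" "v \<in> V" "u \<noteq> v" "col u v = col v u"
  shows "{u, v} \<in> color_class V col i \<longleftrightarrow> col u v = i"
proof
  assume "{u, v} \<in> color_class V col i"
  then obtain u' v' where uv: "{u, v} = {u', v'}" "col u' v' = i"
    unfolding color_class_def by auto
  then have "u = u' \<and> v = v' \<or> u = v' \<and> v = u'" by (simp add: doubleton_eq_iff)
  then show "col u v = i" using uv(2) assms(4) by auto
next
  assume "col u v = i"
  then show "{u, v} \<in> color_class V col i"
    unfolding color_class_def using assms(1-3) by (intro CollectI exI[of _ u] exI[of _ v]) simp
qed

lemma perm_representable_if_simple_perm_graph:
  assumes col_sym: "\<And>x y. x \<in> V \<Longrightarrow> y \<in> V \<Longrightarrow> col x y = col y x"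
    and "simple_perm_graph V (color_class V col i)"
  shows "perm_representable V col i"
proof -
  obtain l and \<pi> :: "nat \<Rightarrow> nat" where "labeling V l"
      and perm: "\<forall>u\<in>V. \<forall>v\<in>V. l u > l v \<longrightarrow> ({u, v} \<in> color_class V col i \<longleftrightarrow> inv \<pi> (l u) < inv \<pi> (l v))"
    using assms(2) unfolding simple_perm_graph_def simple_perm_graph_of_def by auto
  then have "inj_on l V" by (simp add: labeling_def bij_betw_imp_inj_on)
  moreover have "col u v = i \<longleftrightarrow> inv \<pi> (l u) < inv \<pi> (l v)" if "u \<in> V" "v \<in> V" "l v < l u" for u v
  proof -
    have "u \<noteq> v" using that(3) by auto
    then have "{u, v} \<in> color_class V col i \<longleftrightarrow> col u v = i"
      using color_class_iff[OF that(1,2) _ col_sym[OF that(1,2)]] by simp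
    then show ?thesis using perm that by simp
  qed
  ultimately show ?thesis
    unfolding perm_representable_def by (intro exI[of _ l] exI[of _ "\<lambda>u. inv \<pi> (l u)"]) simp
qed

text \<open>For a good labeling l this is the order of the vertices along the permutation representing
  color class i.\<close>
definition flipped_less :: "('a \<Rightarrow> 'a \<Rightarrow> 'c) \<Rightarrow> 'c \<Rightarrow> ('a \<Rightarrow> nat) \<Rightarrow> 'a \<Rightarrow> 'a \<Rightarrow> bool" where
  "flipped_less col i l u v \<longleftrightarrow> (l u < l v \<and> col u v \<noteq> i) \<or> (l v < l u \<and> col u v = i)"

lemma flipped_less_trans:
  assumes col_sym: "\<And>x y. x \<in> W \<Longrightarrow> y \<in> W \<Longrightarrow> col x y = col y x"
    and "good_order W col l" "inj_on l W" "u \<in> W" "v \<in> W" "w \<in> W"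
    and "flipped_less col i l u v" "flipped_less col i l v w"
  shows "flipped_less col i l u w"
proof -
  note s = col_sym[OF assms(4,5)] col_sym[OF assms(5,6)] col_sym[OF assms(4,6)]
  note good = good_orderD[OF assms(2)]
  have "u \<noteq> w"
  proof
    assume "u = w"
    then have "flipped_less col i l v u" using assms(8) by simp
    then show False using assms(7) s(1) unfolding flipped_less_def by auto
  qed
  moreover have "u \<noteq> v" "v \<noteq> w" using assms(7,8) unfolding flipped_less_def by auto
  ultimately have "l u \<noteq> l v" "l v \<noteq> l w" "l u \<noteq> l w"
    using assms(3-6) by (simp_all add: inj_on_eq_iff)
  then show ?thesis
    using assms(7,8) s good[OF assms(4,5,6)] good[OF assms(4,6,5)] good[OF assms(5,4,6)]
      good[OF assms(5,6,4)] good[OF assms(6,4,5)] good[OF assms(6,5,4)]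
    unfolding flipped_less_def by (cases "l u < l v"; cases "l v < l w"; cases "l u < l w") auto
qed

lemma permutation_relabeling:
  assumes l: "bij_betw l V {1..n}" and q: "bij_betw q V {1..n}"
  obtains \<pi> where "\<pi> permutes {1..n}" "\<And>u. u \<in> V \<Longrightarrow> inv \<pi> (l u) = q u"
proof -
  define \<sigma> where "\<sigma> j = (if j \<in> {1..n} then q (inv_into V l j) else j)" for j
  have "bij_betw (q \<circ> inv_into V l) {1..n} {1..n}"
    using bij_betw_trans[OF bij_betw_inv_into[OF l] q] .
  then have "bij_betw \<sigma> {1..n} {1..n}"
    by (rule bij_betw_cong[THEN iffD1, rotated]) (simp add: \<sigma>_def)
  then have \<sigma>: "\<sigma> permutes {1..n}"
    by (rule bij_imp_permutes) (auto simp: \<sigma>_def)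
  have "inv (inv \<sigma>) (l u) = q u" if "u \<in> V" for u
    using inv_inv_eq[OF permutes_bij[OF \<sigma>]] bij_betwE[OF l] bij_betw_imp_inj_on[OF l] that
    by (simp add: \<sigma>_def inv_into_f_f)
  then show ?thesis using that permutes_inv[OF \<sigma>] by blast
qed

lemma perm_graph_of_good_order:
  assumes col_sym: "\<And>x y. x \<in> V \<Longrightarrow> y \<in> V \<Longrightarrow> col x y = col y x"
    and "labeling V l" "good_order V col l"
  shows "\<exists>\<pi>. simple_perm_graph_of V (color_class V col i) l \<pi>"
proof -
  have l: "bij_betw l V {1..card V}" "inj_on l V"
    using assms(2) by (auto simp: labeling_def bij_betw_imp_inj_on)
  then have "finite V" using bij_betw_finite by blast
  have "\<not> flipped_less col i l u u" for u by (simp add: flipped_less_def)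
  moreover have "flipped_less col i l u v \<or> flipped_less col i l v u"
    if "u \<in> V" "v \<in> V" "u \<noteq> v" for u v
  proof -
    have "l u \<noteq> l v" using that l(2) by (simp add: inj_on_eq_iff)
    then show ?thesis using col_sym[OF that(1,2)] by (auto simp: flipped_less_def)
  qed
  ultimately obtain q where q: "bij_betw q V {1..card V}"
      "\<forall>u\<in>V. \<forall>v\<in>V. q u < q v \<longleftrightarrow> flipped_less col i l u v"
    using rank_of_strict_total_order[OF \<open>finite V\<close>, of "flipped_less col i l"]
      flipped_less_trans[OF col_sym assms(3) l(2)] by blast
  obtain \<pi> where \<pi>: "\<pi> permutes {1..card V}" "\<And>u. u \<in> V \<Longrightarrow> inv \<pi> (l u) = q u"
    using permutation_relabeling[OF l(1) q(1)] by blast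
  have "simple_perm_graph_of V (color_class V col i) l \<pi>"
    unfolding simple_perm_graph_of_def
  proof (intro conjI ballI impI)
    show "labeling V l" by (rule assms(2))
    show "\<pi> permutes {1..card V}" by (rule \<pi>(1))
    fix u v assume uv: "u \<in> V" "v \<in> V" "l v < l u"
    then have "{u, v} \<in> color_class V col i \<longleftrightarrow> flipped_less col i l u v"
      using color_class_iff[OF uv(1,2) _ col_sym[OF uv(1,2)]] by (auto simp: flipped_less_def)
    also have "\<dots> \<longleftrightarrow> inv \<pi> (l u) < inv \<pi> (l v)" using q(2) \<pi>(2) uv(1,2) by simp
    finally show "{u, v} \<in> color_class V col i \<longleftrightarrow> inv \<pi> (l u) < inv \<pi> (l v)" .
  qed
  then show ?thesis by blast
qed

lemma gallai_coloring_if_rainbow_free: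
  assumes "complete_edge_colored V k col" "\<not> (\<exists>x y z. rainbow_triangle V col x y z)"
  shows "gallai_coloring V col"
proof
  have "\<forall>u\<in>V. \<forall>v\<in>V. u \<noteq> v \<longrightarrow> col u v = col v u"
    using assms(1) unfolding complete_edge_colored_def by simp
  then show "col x y = col y x" if "x \<in> V" "y \<in> V" for x y
    using that by (cases "x = y") auto
  show "col x y = col y z \<or> col y z = col x z \<or> col x y = col x z"
    if "x \<in> V" "y \<in> V" "z \<in> V" "x \<noteq> y" "y \<noteq> z" "x \<noteq> z" for x y z
    using assms(2) that unfolding rainbow_triangle_def by blast
qed

theorem proposition4p14:
  fixes V :: "'a set" and k :: nat and col :: "'a \<Rightarrow> 'a \<Rightarrow> nat"
  assumes "complete_edge_colored V k col"
    and "\<forall>i\<in>{1..k}. simple_perm_graph V (color_class V col i)"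
    and "\<not> (\<exists>x y z. rainbow_triangle V col x y z)"
  shows "complete_edge_colored_perm_graph V k col"
proof -
  interpret gallai_coloring V col using gallai_coloring_if_rainbow_free[OF assms(1,3)] .
  have fin: "finite V" and colors: "\<forall>u\<in>V. \<forall>v\<in>V. u \<noteq> v \<longrightarrow> col u v \<in> {1..k}"
    using assms(1) unfolding complete_edge_colored_def by simp_all
  have "\<forall>u\<in>V. \<forall>w\<in>V. u \<noteq> w \<longrightarrow> perm_representable V col (col u w)"
    using assms(2) colors by (simp add: perm_representable_if_simple_perm_graph[OF col_sym])
  then obtain f :: "'a \<Rightarrow> nat" where "inj_on f V" "good_order V col f"
    using exists_good_order[OF fin subset_refl] by blast
  then obtain l :: "'a \<Rightarrow> nat" where l: "labeling V l" "good_order V col l"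
    using rank_of_injective[OF fin] good_order_cong unfolding labeling_def by metis
  then have "\<forall>i. \<exists>\<pi>. simple_perm_graph_of V (color_class V col i) l \<pi>"
    using perm_graph_of_good_order[OF col_sym l] by blast
  then obtain \<pi> where "\<forall>i. simple_perm_graph_of V (color_class V col i) l (\<pi> i)" by metis
  then show ?thesis using assms(1) unfolding complete_edge_colored_perm_graph_def by blast
qed

end
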